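(* Let $P(\mathbf{x})$ be set-multilinear with respect to $\mathbf{x}=\mathbf{x}_1\sqcup\cdots\sqcup\mathbf{x}_r$, and let $\mathbf{y}=\mathbf{x}_1\cup\cdots\cup\mathbf{x}_k$ and $\mathbf{z}=\mathbf{x}\setminus\mathbf{y}$. If the dimension of projected shifted partial derivatives is taken with respect to derivatives by set-multilinear monomials in $\mathbf{y}$ only, then for every $\ell$, $\Gamma^{\mathrm{PSPD}}_{k,\ell}(P)\le\Gamma^{\mathrm{SED}}_{k,\ell}(P)$.
   Context: A polynomial is set-multilinear with respect to $\mathbf{x}=\mathbf{x}_1\sqcup\cdots\sqcup\mathbf{x}_r$ if every monomial contains exactly one variable from each part. Let $|\mathbf{y}|=n_y$, $|\mathbf{z}|=n_z$, order variables with $\mathbf{y}$ first, and let $S\subseteq\{0,1\}^{n_y+n_z}$ be the set of strings that are zero on the $\mathbf{y}$ coordinates. For a polynomial $f$ and set $T$ of points, $\mathrm{Eval}_T(f)$ is the vector of values of $f$ on $T$. $\mathbf{z}^{=\ell}$ is the set of monomials of degree exactly $\ell$ in $\mathbf{z}$. Here $\Gamma^{\mathrm{PSPD}}_{k,\ell}(P)=\dim\mathrm{Span}\{\mathrm{Eval}_S(m\cdot \partial P/\partial\mathbf{y}^{\mathbf{e}}) : m\in\mathbf{z}^{=\ell},\ \mathbf{y}^{\mathbf{e}}$ a degree-$k$ monomial in $\mathbf{y}$ that is set-multilinear with respect to $\mathbf{x}_1\sqcup\cdots\sqcup\mathbf{x}_k\}$. The shifted evaluation dimension is $\Gamma^{\mathrm{SED}}_{k,\ell}(P)=\dim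 \mathrm{Span}\{\mathrm{Eval}_{\{0,1\}^{n_z}}(m\cdot P(\mathbf{a},\mathbf{z})) : m\in\mathbf{z}^{=\ell},\ \mathbf{a}\in\{0,1\}^{n_y}$ with at most $k$ ones$\}$. *)

theory Defs
  imports Complex_Main "HOL-Library.Function_Algebras"
begin

text \<open>Multivariate polynomials over a field 'a in variables from a finite set X
  (of type 'v) are represented by coefficient functions on exponent vectors
  ('v \<Rightarrow> nat); exponent vectors are required to vanish outside X.
  The partition x = x_1 \<squnion> ... \<squnion> x_r is given by a map part : X \<rightarrow> {1..r}.\<close>

definition monom_on :: "'v set \<Rightarrow> ('v \<Rightarrow> nat) \<Rightarrow> bool" where
  "monom_on V m \<longleftrightarrow> (\<forall>v. v \<notin> V \<longrightarrow> m v = 0)"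

definition set_multilinear ::
  "'v set \<Rightarrow> ('v \<Rightarrow> nat) \<Rightarrow> nat \<Rightarrow> (('v \<Rightarrow> nat) \<Rightarrow> 'a::zero) \<Rightarrow> bool" where
  "set_multilinear X part r P \<longleftrightarrow>
     (\<forall>m. P m \<noteq> 0 \<longrightarrow> monom_on X m \<and>
        (\<forall>i\<in>{1..r}. (\<Sum>v\<in>{v\<in>X. part v = i}. m v) = 1))"

definition mono_eval :: "'v set \<Rightarrow> ('v \<Rightarrow> nat) \<Rightarrow> ('v \<Rightarrow> 'a::comm_ring_1) \<Rightarrow> 'a" where
  "mono_eval X m a = (\<Prod>v\<in>X. a v ^ m v)"

definition poly_eval ::
  "'v set \<Rightarrow> (('v \<Rightarrow> nat) \<Rightarrow> 'a::comm_ring_1) \<Rightarrow> ('v \<Rightarrow> 'a) \<Rightarrow> 'a" where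
  "poly_eval X P a = (\<Sum>m\<in>{m. P m \<noteq> 0}. P m * mono_eval X m a)"

definition pderiv_mono ::
  "'v set \<Rightarrow> ('v \<Rightarrow> nat) \<Rightarrow> (('v \<Rightarrow> nat) \<Rightarrow> 'a::comm_ring_1) \<Rightarrow> ('v \<Rightarrow> nat) \<Rightarrow> 'a" where
  "pderiv_mono X e P = (\<lambda>m. if monom_on X m
      then of_nat (\<Prod>v\<in>X. fact (m v + e v) div fact (m v)) * P (\<lambda>v. m v + e v)
      else 0)"

definition bool_points :: "'v set \<Rightarrow> ('v \<Rightarrow> 'a::zero_neq_one) set" where
  "bool_points V = {a. (\<forall>v\<in>V. a v = 0 \<or> a v = 1) \<and> (\<forall>v. v \<notin> V \<longrightarrow> a v = 0)}"

definition eval_vec :: "'b set \<Rightarrow> ('b \<Rightarrow> 'a::zero) \<Rightarrow> 'b \<Rightarrow> 'a" where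
  "eval_vec T f = (\<lambda>a. if a \<in> T then f a else 0)"

definition fscale :: "'a::field \<Rightarrow> ('b \<Rightarrow> 'a) \<Rightarrow> 'b \<Rightarrow> 'a" where
  "fscale c f = (\<lambda>x. c * f x)"

definition span_dim :: "('b \<Rightarrow> 'a::field) set \<Rightarrow> nat" where
  "span_dim G = vector_space.dim fscale (module.span fscale G)"

definition deg_monoms :: "'v set \<Rightarrow> nat \<Rightarrow> ('v \<Rightarrow> nat) set" where
  "deg_monoms V l = {m. monom_on V m \<and> (\<Sum>v\<in>V. m v) = l}"

definition sml_monoms :: "'v set \<Rightarrow> ('v \<Rightarrow> nat) \<Rightarrow> nat \<Rightarrow> ('v \<Rightarrow> nat) set" where
  "sml_monoms Y part k = {e. monom_on Y e \<and>
      (\<forall>i\<in>{1..k}. (\<Sum>v\<in>{v\<in>Y. part v = i}. e v) = 1)}"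

definition yvars :: "'v set \<Rightarrow> ('v \<Rightarrow> nat) \<Rightarrow> nat \<Rightarrow> 'v set" where
  "yvars X part k = {v\<in>X. part v \<in> {1..k}}"

definition zvars :: "'v set \<Rightarrow> ('v \<Rightarrow> nat) \<Rightarrow> nat \<Rightarrow> 'v set" where
  "zvars X part k = X - yvars X part k"

definition Gamma_PSPD ::
  "'v set \<Rightarrow> ('v \<Rightarrow> nat) \<Rightarrow> nat \<Rightarrow> nat \<Rightarrow> (('v \<Rightarrow> nat) \<Rightarrow> 'a::field) \<Rightarrow> nat" where
  "Gamma_PSPD X part k l P = span_dim
     {eval_vec (bool_points (zvars X part k))
        (\<lambda>a. mono_eval X mz a * poly_eval X (pderiv_mono X e P) a)
      | mz e. mz \<in> deg_monoms (zvars X part k) l \<and> e \<in> sml_monoms (yvars X part k) part k}"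

definition Gamma_SED ::
  "'v set \<Rightarrow> ('v \<Rightarrow> nat) \<Rightarrow> nat \<Rightarrow> nat \<Rightarrow> (('v \<Rightarrow> nat) \<Rightarrow> 'a::field) \<Rightarrow> nat" where
  "Gamma_SED X part k l P = span_dim
     {eval_vec (bool_points (zvars X part k))
        (\<lambda>b. mono_eval X mz b *
             poly_eval X P (\<lambda>v. if v \<in> yvars X part k then a v else b v))
      | mz a. mz \<in> deg_monoms (zvars X part k) l \<and> a \<in> bool_points (yvars X part k)
              \<and> card {v \<in> yvars X part k. a v \<noteq> 0} \<le> k}"

end

theory Submission
  imports Defs "HOL-Library.FuncSet"
begin

text \<open>Every monomial of P contains exactly one variable of each part x_1, ..., x_k, and all its
  exponents are at most 1. Hence the derivative by a set-multilinear monomial y^e contains no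
  y-variables, its coefficients are those of P without factorial factors, and it coincides with the
  restriction of P to the point where y is the 0/1 indicator of the support of e: at that point
  exactly the monomials of the form y^e * (z-part) survive. This indicator has at most k ones, so
  every generator of the projected shifted partial derivative space is a generator of the shifted
  evaluation space, and the dimension of a finitely generated span is monotone.\<close>

lemma finite_deg_monoms:
  assumes "finite V" shows "finite (deg_monoms V l)"
proof -
  have "deg_monoms V l \<subseteq> (\<lambda>f v. if v \<in> V then f v else 0) ` PiE V (\<lambda>_. {0..l})"
  proof
    fix m assume "m \<in> deg_monoms V l"
    hence mon: "monom_on V m" and deg: "(\<Sum>v\<in>V. m v) = l" by (auto simp: deg_monoms_def)
    have "restrict m V \<in> PiE V (\<lambda>_. {0..l})"
      using member_le_sum[of _ V m] assms deg by (auto simp: PiE_iff)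
    moreover have "m = (\<lambda>v. if v \<in> V then restrict m V v else 0)"
      using mon by (auto simp: monom_on_def fun_eq_iff)
    ultimately show "m \<in> (\<lambda>f v. if v \<in> V then f v else 0) ` PiE V (\<lambda>_. {0..l})" by blast
  qed
  thus ?thesis by (rule finite_subset) (use assms in \<open>auto intro: finite_PiE\<close>)
qed

lemma finite_bool_points:
  assumes "finite V" shows "finite (bool_points V :: ('v \<Rightarrow> 'a::zero_neq_one) set)"
proof -
  have "bool_points V \<subseteq> (\<lambda>S v. if v \<in> S then (1::'a) else 0) ` Pow V"
  proof
    fix a :: "'v \<Rightarrow> 'a" assume "a \<in> bool_points V"
    hence "a = (\<lambda>v. if v \<in> {v\<in>V. a v = 1} then 1 else 0)"
      by (auto simp: bool_points_def fun_eq_iff)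
    thus "a \<in> (\<lambda>S v. if v \<in> S then (1::'a) else 0) ` Pow V" by blast
  qed
  thus ?thesis by (rule finite_subset) (use assms in auto)
qed

lemma card_support_le_sum:
  fixes f :: "'b \<Rightarrow> nat"
  assumes "finite A"
  shows "card {v\<in>A. f v \<noteq> 0} \<le> sum f A"
proof -
  have "card {v\<in>A. f v \<noteq> 0} = (\<Sum>v\<in>{v\<in>A. f v \<noteq> 0}. 1)" by simp
  also have "\<dots> \<le> (\<Sum>v\<in>{v\<in>A. f v \<noteq> 0}. f v)" by (rule sum_mono) auto
  also have "\<dots> \<le> sum f A" by (rule sum_mono2) (use assms in auto)
  finally show ?thesis .
qed

lemma set_multilinear_monom_on:
  "set_multilinear X part r P \<Longrightarrow> P m \<noteq> 0 \<Longrightarrow> monom_on X m"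
  by (simp add: set_multilinear_def)

lemma set_multilinear_part_sum:
  "set_multilinear X part r P \<Longrightarrow> P m \<noteq> 0 \<Longrightarrow> i \<in> {1..r} \<Longrightarrow>
    (\<Sum>v\<in>{v\<in>X. part v = i}. m v) = 1"
  by (simp add: set_multilinear_def)

lemma set_multilinear_exponent_le_1:
  assumes "finite X" "\<forall>v\<in>X. part v \<in> {1..r}" "set_multilinear X part r P" "P m \<noteq> 0"
  shows "m v \<le> 1"
proof (cases "v \<in> X")
  case True
  have "m v \<le> (\<Sum>w\<in>{w\<in>X. part w = part v}. m w)"
    by (rule member_le_sum) (use assms(1) True in auto)
  thus ?thesis using set_multilinear_part_sum[OF assms(3,4)] assms(2) True by simp
next
  case False
  thus ?thesis using set_multilinear_monom_on[OF assms(3,4)] by (simp add: monom_on_def)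
qed

lemma finite_set_multilinear_support:
  assumes "finite X" "\<forall>v\<in>X. part v \<in> {1..r}" "set_multilinear X part r P"
  shows "finite {m. P m \<noteq> 0}"
proof (rule finite_subset)
  show "{m. P m \<noteq> 0} \<subseteq> (\<Union>d\<le>card X. deg_monoms X d)"
  proof
    fix m assume "m \<in> {m. P m \<noteq> 0}"
    hence "P m \<noteq> 0" by simp
    have "(\<Sum>v\<in>X. m v) \<le> (\<Sum>v\<in>X. 1)"
      by (rule sum_mono) (rule set_multilinear_exponent_le_1[OF assms \<open>P m \<noteq> 0\<close>])
    with set_multilinear_monom_on[OF assms(3) \<open>P m \<noteq> 0\<close>]
    show "m \<in> (\<Union>d\<le>card X. deg_monoms X d)" by (auto simp: deg_monoms_def)
  qed
  show "finite (\<Union>d\<le>card X. deg_monoms X d)" using finite_deg_monoms[OF assms(1)] by blast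
qed

lemma sml_monoms_exponent_le_1:
  assumes "finite Y" "\<forall>v\<in>Y. part v \<in> {1..k}" "e \<in> sml_monoms Y part k"
  shows "e v \<le> 1"
proof (cases "v \<in> Y")
  case True
  have "e v \<le> (\<Sum>w\<in>{w\<in>Y. part w = part v}. e w)"
    by (rule member_le_sum) (use assms(1) True in auto)
  thus ?thesis using assms(2,3) True by (simp add: sml_monoms_def)
next
  case False
  thus ?thesis using assms(3) by (simp add: sml_monoms_def monom_on_def)
qed

lemma card_support_sml_monoms_le:
  assumes "finite Y" "\<forall>v\<in>Y. part v \<in> {1..k}" "e \<in> sml_monoms Y part k"
  shows "card {v\<in>Y. e v \<noteq> 0} \<le> k"
proof -
  have "{v\<in>Y. e v \<noteq> 0} = (\<Union>i\<in>{1..k}. {v\<in>{w\<in>Y. part w = i}. e v \<noteq> 0})"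
    using assms(2) by auto
  hence "card {v\<in>Y. e v \<noteq> 0} \<le> (\<Sum>i\<in>{1..k}. card {v\<in>{w\<in>Y. part w = i}. e v \<noteq> 0})"
    using card_UN_le[of "{1..k}"] by simp
  also have "\<dots> \<le> (\<Sum>i\<in>{1..k}. \<Sum>v\<in>{w\<in>Y. part w = i}. e v)"
    by (rule sum_mono, rule card_support_le_sum) (use assms(1) in simp)
  also have "\<dots> = k" using assms(3) by (simp add: sml_monoms_def)
  finally show ?thesis .
qed

lemma yvars_part_eq:
  "i \<in> {1..k} \<Longrightarrow> {v\<in>yvars X part k. part v = i} = {v\<in>X. part v = i}"
  by (auto simp: yvars_def)

context
  fixes X :: "'v set" and part :: "'v \<Rightarrow> nat" and r k :: nat
    and P :: "('v \<Rightarrow> nat) \<Rightarrow> 'a::field" and e :: "'v \<Rightarrow> nat"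
  assumes fin: "finite X"
    and part_range: "\<forall>v\<in>X. part v \<in> {1..r}"
    and sml: "set_multilinear X part r P"
    and e: "e \<in> sml_monoms (yvars X part k) part k"
begin

abbreviation "Y \<equiv> yvars X part k"

lemma sml_exponent_vanishes_outside: "v \<notin> Y \<Longrightarrow> e v = 0"
  using e by (auto simp: sml_monoms_def monom_on_def)

lemma sml_exponent_part_sum:
  assumes "i \<in> {1..k}" shows "(\<Sum>v\<in>{v\<in>X. part v = i}. e v) = 1"
proof -
  have "(\<Sum>v\<in>{v\<in>Y. part v = i}. e v) = 1" using e assms by (simp add: sml_monoms_def)
  thus ?thesis unfolding yvars_part_eq[OF assms] .
qed

lemma sml_exponent_le_1: "e v \<le> 1"
  by (rule sml_monoms_exponent_le_1[OF _ _ e]) (use fin in \<open>auto simp: yvars_def\<close>)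

lemma shifted_exponent_vanishes_on_yvars:
  assumes "P (\<lambda>v. m v + e v) \<noteq> 0" "v \<in> Y"
  shows "m v = 0"
proof -
  from assms(2) have i: "part v \<in> {1..k}" "v \<in> X" by (auto simp: yvars_def)
  let ?A = "{w\<in>X. part w = part v}"
  have "(\<Sum>w\<in>?A. m w + e w) = 1"
    using set_multilinear_part_sum[OF sml assms(1)] part_range i by simp
  hence "(\<Sum>w\<in>?A. m w) = 0" using sml_exponent_part_sum[OF i(1)] by (simp add: sum.distrib)
  thus ?thesis using fin i by simp
qed

text \<open>All factorial quotients in the coefficient equal 1 since e has 0/1 exponents and m is
  zero where e is not.\<close>
lemma pderiv_mono_eq_shift:
  assumes "monom_on X m" "\<forall>v\<in>Y. m v = 0"
  shows "pderiv_mono X e P m = P (\<lambda>v. m v + e v)"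
proof -
  have "fact (m v + e v) div fact (m v) = (1::nat)" for v
  proof (cases "v \<in> Y")
    case True
    thus ?thesis using assms(2) sml_exponent_le_1[of v] by (auto simp: le_Suc_eq)
  qed (simp add: sml_exponent_vanishes_outside)
  thus ?thesis using assms(1) by (simp add: pderiv_mono_def)
qed

lemma pderiv_mono_nonzeroD:
  assumes "pderiv_mono X e P m \<noteq> 0"
  shows "monom_on X m" "\<forall>v\<in>Y. m v = 0" "P (\<lambda>v. m v + e v) \<noteq> 0"
proof -
  show mon: "monom_on X m" and shift: "P (\<lambda>v. m v + e v) \<noteq> 0"
    using assms by (auto simp: pderiv_mono_def split: if_splits)
  show "\<forall>v\<in>Y. m v = 0" using shifted_exponent_vanishes_on_yvars[OF shift] by blast
qed

lemma bij_betw_pderiv_support: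
  "bij_betw (\<lambda>m v. m v + e v) {m. pderiv_mono X e P m \<noteq> 0}
     {m. P m \<noteq> 0 \<and> (\<forall>v\<in>Y. m v = e v)}"
proof (rule bij_betw_byWitness[where f' = "\<lambda>m v. m v - e v"])
  have restore: "(\<lambda>v. m v - e v + e v) = m" if "\<forall>v\<in>Y. m v = e v" for m
  proof
    show "m v - e v + e v = m v" for v
      by (cases "v \<in> Y") (use that sml_exponent_vanishes_outside in auto)
  qed
  show "\<forall>m\<in>{m. P m \<noteq> 0 \<and> (\<forall>v\<in>Y. m v = e v)}. (\<lambda>v. m v - e v + e v) = m"
    using restore by blast
  show "(\<lambda>m v. m v - e v) ` {m. P m \<noteq> 0 \<and> (\<forall>v\<in>Y. m v = e v)}
      \<subseteq> {m. pderiv_mono X e P m \<noteq> 0}"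
  proof safe
    fix m assume P: "P m \<noteq> 0" and agree: "\<forall>v\<in>Y. m v = e v"
    have "monom_on X (\<lambda>v. m v - e v)"
      using set_multilinear_monom_on[OF sml P] by (simp add: monom_on_def)
    with agree have "pderiv_mono X e P (\<lambda>v. m v - e v) = P m"
      using pderiv_mono_eq_shift restore by simp
    with P show "pderiv_mono X e P (\<lambda>v. m v - e v) = 0 \<Longrightarrow> False" by simp
  qed
  show "(\<lambda>m v. m v + e v) ` {m. pderiv_mono X e P m \<noteq> 0}
      \<subseteq> {m. P m \<noteq> 0 \<and> (\<forall>v\<in>Y. m v = e v)}"
    using pderiv_mono_nonzeroD by auto
qed (auto simp: fun_eq_iff)

text \<open>A monomial of P that differs from e on y has, in the part where they differ, a variable
  that it contains and e does not; that variable is set to 0.\<close>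
lemma mono_eval_indicator_eq_0:
  assumes P: "P m \<noteq> 0" and differ: "\<exists>v\<in>Y. m v \<noteq> e v"
  shows "mono_eval X m (\<lambda>v. if v \<in> Y then of_bool (e v \<noteq> 0) else b v) = 0"
proof -
  from differ obtain v where v: "v \<in> Y" "m v \<noteq> e v" by blast
  hence i: "part v \<in> {1..k}" "v \<in> X" by (auto simp: yvars_def)
  let ?A = "{w\<in>X. part w = part v}"
  have "\<exists>w\<in>?A. m w \<noteq> 0 \<and> e w = 0"
  proof (rule ccontr)
    assume none: "\<not> ?thesis"
    have le: "\<forall>w\<in>?A. m w \<le> e w"
    proof
      fix w assume "w \<in> ?A"
      with none have "m w = 0 \<or> e w \<noteq> 0" by auto
      thus "m w \<le> e w" using set_multilinear_exponent_le_1[OF fin part_range sml P, of w] sml_exponent_le_1[of w] by auto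
    qed
    have "(\<Sum>w\<in>?A. m w) < (\<Sum>w\<in>?A. e w)"
    proof (rule sum_strict_mono_ex1)
      show "\<exists>w\<in>?A. m w < e w" using le v i by (intro bexI[of _ v]) auto
    qed (use fin le in auto)
    thus False
      using set_multilinear_part_sum[OF sml P] part_range i sml_exponent_part_sum[OF i(1)] by simp
  qed
  then obtain w where w: "w \<in> X" "part w \<in> {1..k}" "m w \<noteq> 0" "e w = 0" using i by auto
  show ?thesis
    unfolding mono_eval_def
  proof (rule prod_zero[OF fin], rule bexI[OF _ w(1)])
    show "(if w \<in> Y then of_bool (e w \<noteq> 0) else b w) ^ m w = 0"
      using w by (simp add: yvars_def zero_power)
  qed
qed

lemma poly_eval_pderiv_mono:
  "poly_eval X (pderiv_mono X e P) b =
     poly_eval X P (\<lambda>v. if v \<in> Y then of_bool (e v \<noteq> 0) else b v)"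
proof -
  define c where "c = (\<lambda>v. if v \<in> Y then of_bool (e v \<noteq> 0) else b v)"
  define M where "M = {m. P m \<noteq> 0 \<and> (\<forall>v\<in>Y. m v = e v)}"
  have "poly_eval X P c = (\<Sum>m\<in>M. P m * mono_eval X m c)"
    unfolding poly_eval_def
    by (rule sum.mono_neutral_right)
      (use finite_set_multilinear_support[OF fin part_range sml] mono_eval_indicator_eq_0
        in \<open>auto simp: M_def c_def\<close>)
  also have "\<dots> = (\<Sum>m | pderiv_mono X e P m \<noteq> 0.
      P (\<lambda>v. m v + e v) * mono_eval X (\<lambda>v. m v + e v) c)"
    using sum.reindex_bij_betw[OF bij_betw_pderiv_support, of "\<lambda>m. P m * mono_eval X m c"]
    by (simp add: M_def)
  also have "\<dots> = (\<Sum>m | pderiv_mono X e P m \<noteq> 0. pderiv_mono X e P m * mono_eval X m b)"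
  proof (rule sum.cong[OF refl])
    fix m assume "m \<in> {m. pderiv_mono X e P m \<noteq> 0}"
    hence mon: "monom_on X m" and zero: "\<forall>v\<in>Y. m v = 0"
      using pderiv_mono_nonzeroD by auto
    have "c v ^ (m v + e v) = b v ^ m v" for v
      using zero sml_exponent_le_1[of v] sml_exponent_vanishes_outside[of v] by (auto simp: c_def le_Suc_eq)
    thus "P (\<lambda>v. m v + e v) * mono_eval X (\<lambda>v. m v + e v) c =
        pderiv_mono X e P m * mono_eval X m b"
      using pderiv_mono_eq_shift[OF mon zero] by (simp add: mono_eval_def)
  qed
  finally show ?thesis by (simp add: poly_eval_def c_def)
qed

end

lemma vector_space_fscale: "vector_space (fscale :: 'a::field \<Rightarrow> ('b \<Rightarrow> 'a) \<Rightarrow> 'b \<Rightarrow> 'a)"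
  by unfold_locales (auto simp: fscale_def fun_eq_iff algebra_simps)

text \<open>Finiteness of H matters: the dimension of an infinite-dimensional span is 0.\<close>
lemma span_dim_mono:
  fixes G H :: "('b \<Rightarrow> 'a::field) set"
  assumes "G \<subseteq> H" "finite H"
  shows "span_dim G \<le> span_dim H"
proof -
  interpret vector_space "fscale :: 'a \<Rightarrow> ('b \<Rightarrow> 'a) \<Rightarrow> 'b \<Rightarrow> 'a" by (rule vector_space_fscale)
  show ?thesis unfolding span_dim_def dim_span
    by (metis assms basis_exists dim_le_card finite_subset span_base subset_iff)
qed

definition PSPD_generators ::
  "'v set \<Rightarrow> ('v \<Rightarrow> nat) \<Rightarrow> nat \<Rightarrow> nat \<Rightarrow> (('v \<Rightarrow> nat) \<Rightarrow> 'a::field) \<Rightarrow> (('v \<Rightarrow> 'a) \<Rightarrow> 'a) set"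
  where "PSPD_generators X part k l P =
     {eval_vec (bool_points (zvars X part k))
        (\<lambda>a. mono_eval X mz a * poly_eval X (pderiv_mono X e P) a)
      | mz e. mz \<in> deg_monoms (zvars X part k) l \<and> e \<in> sml_monoms (yvars X part k) part k}"

definition SED_generators ::
  "'v set \<Rightarrow> ('v \<Rightarrow> nat) \<Rightarrow> nat \<Rightarrow> nat \<Rightarrow> (('v \<Rightarrow> nat) \<Rightarrow> 'a::field) \<Rightarrow> (('v \<Rightarrow> 'a) \<Rightarrow> 'a) set"
  where "SED_generators X part k l P =
     {eval_vec (bool_points (zvars X part k))
        (\<lambda>b. mono_eval X mz b *
             poly_eval X P (\<lambda>v. if v \<in> yvars X part k then a v else b v))
      | mz a. mz \<in> deg_monoms (zvars X part k) l \<and> a \<in> bool_points (yvars X part k)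
              \<and> card {v \<in> yvars X part k. a v \<noteq> 0} \<le> k}"

lemma finite_SED_generators:
  assumes "finite X" shows "finite (SED_generators X part k l P)"
proof (rule finite_subset)
  let ?Y = "yvars X part k" and ?Z = "zvars X part k"
  show "SED_generators X part k l P \<subseteq> (\<lambda>(mz, a). eval_vec (bool_points ?Z)
      (\<lambda>b. mono_eval X mz b * poly_eval X P (\<lambda>v. if v \<in> ?Y then a v else b v)))
      ` (deg_monoms ?Z l \<times> bool_points ?Y)"
    by (auto simp: SED_generators_def)
  have "finite ?Y" "finite ?Z" using assms by (simp_all add: yvars_def zvars_def)
  thus "finite ((\<lambda>(mz, a). eval_vec (bool_points ?Z)
      (\<lambda>b. mono_eval X mz b * poly_eval X P (\<lambda>v. if v \<in> ?Y then a v else b v)))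
      ` (deg_monoms ?Z l \<times> bool_points ?Y))"
    using finite_deg_monoms finite_bool_points by blast
qed

lemma PSPD_generators_subset_SED_generators:
  fixes P :: "('v \<Rightarrow> nat) \<Rightarrow> 'a::field"
  assumes "finite X" "\<forall>v\<in>X. part v \<in> {1..r}" "set_multilinear X part r P"
  shows "PSPD_generators X part k l P \<subseteq> SED_generators X part k l P"
proof
  let ?Y = "yvars X part k"
  fix g assume "g \<in> PSPD_generators X part k l P"
  then obtain mz e where g: "g = eval_vec (bool_points (zvars X part k))
      (\<lambda>a. mono_eval X mz a * poly_eval X (pderiv_mono X e P) a)"
    and mz: "mz \<in> deg_monoms (zvars X part k) l" and e: "e \<in> sml_monoms ?Y part k"
    by (auto simp: PSPD_generators_def)
  define a where "a = (\<lambda>v. if v \<in> ?Y then of_bool (e v \<noteq> 0) else (0::'a))"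
  have "a \<in> bool_points ?Y" by (auto simp: a_def bool_points_def)
  moreover have "{v \<in> ?Y. a v \<noteq> 0} = {v \<in> ?Y. e v \<noteq> 0}" by (auto simp: a_def)
  with card_support_sml_monoms_le[OF _ _ e] assms(1)
  have "card {v \<in> ?Y. a v \<noteq> 0} \<le> k" by (simp add: yvars_def)
  moreover have "g = eval_vec (bool_points (zvars X part k))
      (\<lambda>b. mono_eval X mz b * poly_eval X P (\<lambda>v. if v \<in> ?Y then a v else b v))"
    using poly_eval_pderiv_mono[OF assms e] by (simp add: g a_def if_distrib cong: if_cong)
  ultimately show "g \<in> SED_generators X part k l P"
    using mz unfolding SED_generators_def by blast
qed

theorem corollary4p6:
  fixes X :: "'v set" and part :: "'v \<Rightarrow> nat" and r k l :: nat
    and P :: "('v \<Rightarrow> nat) \<Rightarrow> 'a::field"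
  assumes "finite X"
    and "\<forall>v\<in>X. part v \<in> {1..r}"
    and "set_multilinear X part r P"
  shows "Gamma_PSPD X part k l P \<le> Gamma_SED X part k l P"
proof -
  have "span_dim (PSPD_generators X part k l P) \<le> span_dim (SED_generators X part k l P)"
    by (rule span_dim_mono[OF PSPD_generators_subset_SED_generators[OF assms]
          finite_SED_generators[OF assms(1)]])
  thus ?thesis
    by (simp add: Gamma_PSPD_def Gamma_SED_def PSPD_generators_def SED_generators_def)
qed

end
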